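(* Let $Q$ be a generic spherical quadrilateral. Then the net of $Q$ does not contain an arc with its two ends at two opposite corners of $Q$.
   Context: A spherical quadrilateral $Q$ is a surface homeomorphic to a closed disk with a Riemannian metric of constant curvature $1$, with four conic singularities (corners) $a_0,\dots,a_3$ on the boundary, labeled counterclockwise, such that the boundary arcs $[a_j,a_{j+1}]$ (the sides) are geodesic; opposite corners are $a_0,a_2$ and $a_1,a_3$. Its developing map $\Phi:Q\to\mathbb S$ to the unit sphere is the analytic continuation of a local isometry. $Q$ is generic if the images under $\Phi$ of its four sides lie on four distinct great circles, no three of which have a common point; these circles define a partition $\mathcal P$ of $\mathbb S$. The net $\Gamma$ of $Q$ is the cell decomposition of $Q$ whose vertices, edges and faces are the connected components of the preimages under $\Phi$ of the vertices, edges and faces of $\mathcal P$; corners of $Q$ are vertices of $\Gamma$. For a circle $C$ of $\mathcal P$, a $C$-arc is a simple path in $\Gamma\cap\Phi^{-1}(C)$ with ends at vertices of $\Gamma$, which may contain corners of $Q$ only at its ends; an arc is a $C$-arc for some circle $C$ of $\mathcal P$. *)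

theory Defs
  imports "HOL-Analysis.Analysis"
begin

text \<open>Q is identified (via a homeomorphism,
  orientation preserving) with the closed unit disk cball 0 1 in the complex plane;
  the metric of Q is the pullback of the metric of the unit sphere S in real^3
  under the developing map Phi.\<close>

definition closed_disk :: "complex set" where
  "closed_disk = cball 0 1"

definition unit_sphere3 :: "(real^3) set" where
  "unit_sphere3 = sphere 0 1"

text \<open>Point at spherical distance r from p in direction theta (w.r.t. the frame u, v).\<close>
definition cone_pt :: "real^3 \<Rightarrow> real^3 \<Rightarrow> real^3 \<Rightarrow> real \<Rightarrow> real \<Rightarrow> real^3" where
  "cone_pt p u v r \<theta> = cos r *\<^sub>R p + sin r *\<^sub>R (cos \<theta> *\<^sub>R u + sin \<theta> *\<^sub>R v)"

definition orthonormal3 :: "real^3 \<Rightarrow> real^3 \<Rightarrow> real^3 \<Rightarrow> bool" where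
  "orthonormal3 p u v \<longleftrightarrow> norm p = 1 \<and> norm u = 1 \<and> norm v = 1 \<and>
     p \<bullet> u = 0 \<and> p \<bullet> v = 0 \<and> u \<bullet> v = 0"

definition upper_half_disk :: "real \<Rightarrow> complex set" where
  "upper_half_disk e = {w. cmod w < e \<and> 0 \<le> Im w}"

text \<open>Local model at a point z of the boundary circle: a neighbourhood of z in Q is
  isometric to a spherical sector of angle beta and radius e bounded by two geodesic
  rays lying in the boundary of Q; the developing map is the exponential map of that sector.\<close>
definition boundary_cone_model :: "(complex \<Rightarrow> real^3) \<Rightarrow> complex \<Rightarrow> real \<Rightarrow> bool" where
  "boundary_cone_model \<Phi> z \<beta> \<longleftrightarrow>
     (\<exists>U g h e p u v. 0 < e \<and> e < pi \<and>
        openin (top_of_set closed_disk) U \<and> z \<in> U \<and>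
        homeomorphism (upper_half_disk e) U g h \<and> g 0 = z \<and>
        g ` {w \<in> upper_half_disk e. Im w = 0} = U \<inter> sphere 0 1 \<and>
        orthonormal3 p u v \<and>
        (\<forall>w \<in> upper_half_disk e. \<Phi> (g w) = cone_pt p u v (cmod w) (\<beta> / pi * Arg w)))"

text \<open>Interior points: the developing map is a local homeomorphism (local isometry).\<close>
definition interior_regular :: "(complex \<Rightarrow> real^3) \<Rightarrow> complex \<Rightarrow> bool" where
  "interior_regular \<Phi> z \<longleftrightarrow> (\<exists>e>0. ball z e \<subseteq> closed_disk \<and> inj_on \<Phi> (ball z e))"

definition corner :: "(nat \<Rightarrow> real) \<Rightarrow> nat \<Rightarrow> complex" where
  "corner t j = cis (t j)"

definition corners :: "(nat \<Rightarrow> real) \<Rightarrow> complex set" where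
  "corners t = corner t ` {..<4}"

definition tt :: "(nat \<Rightarrow> real) \<Rightarrow> nat \<Rightarrow> real" where
  "tt t j = (if j = 4 then t 0 + 2 * pi else t j)"

text \<open>Side [a_j, a_(j+1)] (counterclockwise boundary arc), j < 4, indices mod 4.\<close>
definition side :: "(nat \<Rightarrow> real) \<Rightarrow> nat \<Rightarrow> complex set" where
  "side t j = cis ` {t j .. tt t (Suc j)}"

definition spherical_quadrilateral :: "(complex \<Rightarrow> real^3) \<Rightarrow> (nat \<Rightarrow> real) \<Rightarrow> bool" where
  "spherical_quadrilateral \<Phi> t \<longleftrightarrow>
     t 0 < t 1 \<and> t 1 < t 2 \<and> t 2 < t 3 \<and> t 3 < t 0 + 2 * pi \<and>
     continuous_on closed_disk \<Phi> \<and> \<Phi> ` closed_disk \<subseteq> unit_sphere3 \<and>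
     (\<forall>z. cmod z < 1 \<longrightarrow> interior_regular \<Phi> z) \<and>
     (\<forall>z. cmod z = 1 \<and> z \<notin> corners t \<longrightarrow> boundary_cone_model \<Phi> z pi) \<and>
     (\<forall>j<4. \<exists>\<beta>>0. boundary_cone_model \<Phi> (corner t j) \<beta>)"

definition great_circle :: "real^3 \<Rightarrow> (real^3) set" where
  "great_circle n = {x. norm x = 1 \<and> n \<bullet> x = 0}"

definition generic_circles :: "(complex \<Rightarrow> real^3) \<Rightarrow> (nat \<Rightarrow> real) \<Rightarrow> (nat \<Rightarrow> real^3) \<Rightarrow> bool" where
  "generic_circles \<Phi> t n \<longleftrightarrow>
     (\<forall>j<4. norm (n j) = 1 \<and> \<Phi> ` side t j \<subseteq> great_circle (n j)) \<and>
     (\<forall>i<4. \<forall>j<4. i \<noteq> j \<longrightarrow> great_circle (n i) \<noteq> great_circle (n j)) \<and>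
     (\<forall>i<4. \<forall>j<4. \<forall>k<4. i \<noteq> j \<and> j \<noteq> k \<and> i \<noteq> k \<longrightarrow>
        great_circle (n i) \<inter> great_circle (n j) \<inter> great_circle (n k) = {})"

text \<open>A C-arc of the net joining corners j and k: a simple path in the preimage of C,
  meeting corners only at its ends (the corners are vertices of the net).\<close>
definition net_arc_between :: "(complex \<Rightarrow> real^3) \<Rightarrow> (nat \<Rightarrow> real) \<Rightarrow> (real^3) set \<Rightarrow> nat \<Rightarrow> nat \<Rightarrow> bool" where
  "net_arc_between \<Phi> t C j k \<longleftrightarrow>
     (\<exists>\<gamma>. arc \<gamma> \<and> path_image \<gamma> \<subseteq> closed_disk \<inter> \<Phi> -` C \<and>
        pathstart \<gamma> = corner t j \<and> pathfinish \<gamma> = corner t k \<and>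
        (\<forall>s\<in>{0<..<1}. \<gamma> s \<notin> corners t))"

end

theory Submission
  imports Defs
begin

text \<open>Each corner lies on the two sides meeting there, so its image lies on the circles of
  these two sides; since no three circles meet, these are the only circles of the partition
  through it. Opposite corners share no side, hence no circle of the partition contains the
  images of both, and no arc on a single circle can join them.\<close>

lemma side_endpoints:
  assumes "t j \<le> tt t (Suc j)"
  shows "cis (t j) \<in> side t j" and "cis (tt t (Suc j)) \<in> side t j"
  using assms unfolding side_def by auto

lemma cis_tt_Suc:
  assumes "j < 4"
  shows "cis (tt t (Suc j)) = corner t (Suc j mod 4)"
proof (cases "j = 3")
  case True
  have "cis (t 0 + 2 * pi) = cis (t 0)"
    by (simp add: complex_eq_iff)
  with True show ?thesis
    by (simp add: tt_def corner_def)
next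
  case False
  with assms show ?thesis
    by (simp add: tt_def corner_def)
qed

lemma spherical_quadrilateral_side_ordered:
  assumes "spherical_quadrilateral \<Phi> t" and "j < 4"
  shows "t j \<le> tt t (Suc j)"
proof -
  have "t 0 < t 1" "t 1 < t 2" "t 2 < t 3" "t 3 < t 0 + 2 * pi"
    using assms(1) unfolding spherical_quadrilateral_def by auto
  moreover have "j = 0 \<or> j = 1 \<or> j = 2 \<or> j = 3"
    using assms(2) by auto
  ultimately show ?thesis
    by (auto simp: tt_def numeral_eq_Suc)
qed

lemma corner_mem_sides:
  assumes "spherical_quadrilateral \<Phi> t" and "j < 4"
  shows "corner t j \<in> side t j" and "corner t j \<in> side t ((j + 3) mod 4)"
proof -
  show "corner t j \<in> side t j"
    using side_endpoints(1) spherical_quadrilateral_side_ordered[OF assms]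
    by (simp add: corner_def)
  define i where "i = (j + 3) mod 4"
  have "i < 4" and "Suc i mod 4 = j"
    using assms(2) unfolding i_def by presburger+
  then show "corner t j \<in> side t i"
    using side_endpoints(2) spherical_quadrilateral_side_ordered[OF assms(1)] cis_tt_Suc
    by metis
qed

lemma circle_through_corner:
  assumes q: "spherical_quadrilateral \<Phi> t" and gen: "generic_circles \<Phi> t n"
    and j: "j < 4" and i: "i < 4" and on_circle: "\<Phi> (corner t j) \<in> great_circle (n i)"
  shows "i = j \<or> i = (j + 3) mod 4"
proof (rule ccontr)
  assume other: "\<not> (i = j \<or> i = (j + 3) mod 4)"
  define j' where "j' = (j + 3) mod 4"
  have "j' < 4" and "j \<noteq> j'"
    using j unfolding j'_def by presburger+
  have "\<Phi> (corner t j) \<in> great_circle (n j)" and "\<Phi> (corner t j) \<in> great_circle (n j')"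
    using corner_mem_sides[OF q j] gen \<open>j' < 4\<close> j
    unfolding generic_circles_def j'_def by blast+
  moreover have "great_circle (n i) \<inter> great_circle (n j) \<inter> great_circle (n j') = {}"
    using gen i j \<open>j' < 4\<close> \<open>j \<noteq> j'\<close> other
    unfolding generic_circles_def j'_def by blast
  ultimately show False
    using on_circle by blast
qed

theorem lemma2p11:
  fixes \<Phi> :: "complex \<Rightarrow> real^3" and t :: "nat \<Rightarrow> real" and n :: "nat \<Rightarrow> real^3"
  assumes "spherical_quadrilateral \<Phi> t"
    and "generic_circles \<Phi> t n"
  shows "\<not> (\<exists>j<4. \<exists>C \<in> great_circle ` n ` {..<4}. net_arc_between \<Phi> t C j ((j + 2) mod 4))"
proof
  assume "\<exists>j<4. \<exists>C \<in> great_circle ` n ` {..<4}. net_arc_between \<Phi> t C j ((j + 2) mod 4)"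
  then obtain j i \<gamma> where j: "j < 4" and i: "i < 4"
    and \<gamma>: "path_image \<gamma> \<subseteq> \<Phi> -` great_circle (n i)"
      "pathstart \<gamma> = corner t j" "pathfinish \<gamma> = corner t ((j + 2) mod 4)"
    unfolding net_arc_between_def by blast
  have "\<Phi> (corner t j) \<in> great_circle (n i)"
    and "\<Phi> (corner t ((j + 2) mod 4)) \<in> great_circle (n i)"
    using \<gamma> pathstart_in_path_image pathfinish_in_path_image by (metis subsetD vimageE)+
  then have "i = j \<or> i = (j + 3) mod 4"
    and "i = (j + 2) mod 4 \<or> i = ((j + 2) mod 4 + 3) mod 4"
    using circle_through_corner[OF assms _ i] j by auto
  moreover have "j = 0 \<or> j = 1 \<or> j = 2 \<or> j = 3"
    using j by auto
  ultimately show False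
    by auto
qed

end
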